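(* Let $(X,d)$ be a complete $\mathrm{CAT}(0)$-space, $\Omega\subset X$ a bounded set satisfying Condition (TB) with constant $\mathbf m$, and $\varepsilon:=(6\mathbf m)^{-1}$. Let $\xi:[0,\ell)\to X$ be a self-contracted curve with $\xi([0,\ell))\subset\Omega$. Fix $\tau\in[0,\ell)$ and let $\bar\gamma_\tau\in\Sigma_{\xi(\tau)}X$ satisfy $\angle_{\xi(\tau)}(\bar\gamma_\tau,\gamma_{\xi(\tau)\xi(t)})\le\arccos(3\varepsilon)$ for all $t\in(\tau,\ell)$ with $\xi(t)\ne\xi(\tau)$ (such $\bar\gamma_\tau$ exists). For $\sigma>0$ let $$\Omega_{\tau,\sigma}:=\{x\in X:\ 0<d(\xi(\tau),x)<\sigma,\ \angle_{\xi(\tau)}(\gamma_{\xi(\tau)x},\bar\gamma_\tau)\ge\pi-2\arcsin(\varepsilon/2)\},$$ and for $x\in\Omega_{\tau,\sigma}$ let $V_x:=\gamma_{x\xi(\tau)}\in\Sigma_xX$. Then for all $T\in(\tau,\ell)$, $x\in\Omega_{\tau,\sigma}$ and $\gamma\in\Sigma_xX$ with $\angle_x(V_x,\gamma)\le2\arcsin(\varepsilon/2)$, $$\big|\Pi_\gamma(\Xi(T))\big|\le\big|\Pi_\gamma(\Xi(\tau))\big|-\frac{\varepsilon}{2}\,d\big(\xi(\tau),\xi(T)\big).$$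
   Context: A geodesic metric space $(X,d)$ is a $\mathrm{CAT}(0)$-space if for all $x,y,z\in X$ and every minimal geodesic $\gamma$ from $y$ to $z$, $d^2(x,\gamma(s))\le(1-s)d^2(x,y)+sd^2(x,z)-(1-s)sd^2(y,z)$ for all $s\in[0,1]$; minimal geodesics are unique, denoted $\gamma_{xy}$. For geodesics $\gamma,\eta$ from $x$, $\angle_x(\gamma,\eta):=\lim_{s,t\to0}\tilde\angle[\gamma(s)x\eta(t)]$ with $\cos\tilde\angle[yxz]=\frac{d^2(x,y)+d^2(x,z)-d^2(y,z)}{2d(x,y)d(x,z)}$. The space of directions $\Sigma_xX$ is the completion, with respect to $\angle_x$, of $\{\gamma_{xy}:y\ne x\}$ modulo $\angle_x=0$. The tangent cone $C_xX$ is the Euclidean cone $(\Sigma_xX\times[0,\infty))/(\Sigma_xX\times\{0\})$ with origin $o_x$ and metric $d_x((\gamma,s),(\eta,t))=\sqrt{s^2+t^2-2st\cos\angle_x(\gamma,\eta)}$. Define $\log_x:X\to C_xX$, $\log_x(y)=(\gamma_{xy},d(x,y))$ ($\log_x(x)=o_x$); for $\gamma\in\Sigma_xX$, $P_\gamma:C_xX\to\mathbb{R}$, $P_\gamma((\eta,s))=s\cos\angle_x(\gamma,\eta)$, $P_\gamma(o_x)=0$; for $\Xi\subset X$, $\Pi_\gamma(\Xi)$ is the smallest closed interval containing $P_\gamma(\log_x(\Xi))$, and $|\cdot|$ is Lebesgue measure. Condition (TB) on $\Omega$ with constant $\mathbf m$: for every $x\in\Omega$, every subset $\Delta\subset\Sigma_xX$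 with $\angle_x(\gamma,\eta)\ge\pi/3$ for all distinct $\gamma,\eta\in\Delta$ has cardinality at most $\mathbf m$. A map $\xi:[0,\ell)\to X$ (not necessarily continuous) is self-contracted if $d(\xi(t_2),\xi(t_3))\le d(\xi(t_1),\xi(t_3))$ for all $0\le t_1\le t_2\le t_3<\ell$; $\Xi(t):=\xi([t,\ell))$. *)

theory Defs
  imports "HOL-Analysis.Analysis"
begin

(* The CAT(0) space X is the whole (nonempty) type 'a; completeness is the
   type class complete_space. *)

definition geodesic_path :: "(real \<Rightarrow> 'a::metric_space) \<Rightarrow> 'a \<Rightarrow> 'a \<Rightarrow> bool" where
  "geodesic_path g y z \<longleftrightarrow> g 0 = y \<and> g 1 = z \<and>
     (\<forall>s\<in>{0..1}. \<forall>t\<in>{0..1}. dist (g s) (g t) = \<bar>s - t\<bar> * dist y z)"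

definition CAT0 :: "'a::metric_space itself \<Rightarrow> bool" where
  "CAT0 _ \<longleftrightarrow> (\<forall>y z::'a. \<exists>g. geodesic_path g y z) \<and>
     (\<forall>x y z::'a. \<forall>g. geodesic_path g y z \<longrightarrow>
        (\<forall>s\<in>{0..1}. (dist x (g s))\<^sup>2 \<le> (1 - s) * (dist x y)\<^sup>2 + s * (dist x z)\<^sup>2
                                 - (1 - s) * s * (dist y z)\<^sup>2))"

(* the (unique, in a CAT(0) space) minimal geodesic gamma_{yz} *)
definition geod :: "'a::metric_space \<Rightarrow> 'a \<Rightarrow> real \<Rightarrow> 'a" where
  "geod y z = (SOME g. geodesic_path g y z)"

definition cmp_angle :: "'a::metric_space \<Rightarrow> 'a \<Rightarrow> 'a \<Rightarrow> real" where
  "cmp_angle x y z = arccos (((dist x y)\<^sup>2 + (dist x z)\<^sup>2 - (dist y z)\<^sup>2) / (2 * dist x y * dist x z))"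

definition ang :: "'a::metric_space \<Rightarrow> 'a \<Rightarrow> 'a \<Rightarrow> real" where
  "ang x y z = Lim (at_right 0 \<times>\<^sub>F at_right 0)
       (\<lambda>(s,t). cmp_angle x (geod x y s) (geod x z t))"

(* Space of directions Sigma_x X = completion of {gamma_{xy} : y \<noteq> x} w.r.t. the
   angle pseudometric, modulo angle 0.  An element is represented by a Cauchy
   sequence (w.r.t. the angle) of points y_n \<noteq> x; the direction gamma_{xy} is
   represented by the constant sequence (\<lambda>_. y).  All notions below depend only on
   the equivalence class. *)
definition dirs :: "'a::metric_space \<Rightarrow> (nat \<Rightarrow> 'a) set" where
  "dirs x = {u. (\<forall>n. u n \<noteq> x) \<and>
      (\<forall>e>0. \<exists>N. \<forall>m\<ge>N. \<forall>n\<ge>N. ang x (u m) (u n) < e)}"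

definition dang :: "'a::metric_space \<Rightarrow> (nat \<Rightarrow> 'a) \<Rightarrow> (nat \<Rightarrow> 'a) \<Rightarrow> real" where
  "dang x u v = lim (\<lambda>n. ang x (u n) (v n))"

definition dir :: "'a \<Rightarrow> nat \<Rightarrow> 'a" where
  "dir y = (\<lambda>_. y)"

definition Plog :: "'a::metric_space \<Rightarrow> (nat \<Rightarrow> 'a) \<Rightarrow> 'a \<Rightarrow> real" where
  "Plog x g y = (if y = x then 0 else dist x y * cos (dang x g (dir y)))"

definition PiInt :: "'a::metric_space \<Rightarrow> (nat \<Rightarrow> 'a) \<Rightarrow> 'a set \<Rightarrow> real set" where
  "PiInt x g S = \<Inter>{{a..b} | a b. Plog x g ` S \<subseteq> {a..b}}"

definition TB :: "'a::metric_space set \<Rightarrow> nat \<Rightarrow> bool" where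
  "TB \<Omega> m \<longleftrightarrow> (\<forall>x\<in>\<Omega>. \<forall>\<Delta>. \<Delta> \<subseteq> dirs x \<and>
      (\<forall>g\<in>\<Delta>. \<forall>h\<in>\<Delta>. g \<noteq> h \<longrightarrow> dang x g h \<ge> pi / 3)
      \<longrightarrow> finite \<Delta> \<and> card \<Delta> \<le> m)"

definition self_contracted :: "(real \<Rightarrow> 'a::metric_space) \<Rightarrow> real \<Rightarrow> bool" where
  "self_contracted \<xi> l \<longleftrightarrow> (\<forall>t1 t2 t3. 0 \<le> t1 \<and> t1 \<le> t2 \<and> t2 \<le> t3 \<and> t3 < l \<longrightarrow>
       dist (\<xi> t2) (\<xi> t3) \<le> dist (\<xi> t1) (\<xi> t3))"

definition Xi :: "(real \<Rightarrow> 'a) \<Rightarrow> real \<Rightarrow> real \<Rightarrow> 'a set" where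
  "Xi \<xi> l t = \<xi> ` {t..<l}"

definition Omega_ts :: "'a::metric_space \<Rightarrow> (nat \<Rightarrow> 'a) \<Rightarrow> real \<Rightarrow> real \<Rightarrow> 'a set" where
  "Omega_ts p gb \<epsilon> \<sigma> = {x. 0 < dist p x \<and> dist p x < \<sigma> \<and>
       dang p (dir x) gb \<ge> pi - 2 * arcsin (\<epsilon> / 2)}"

end

theory Submission
  imports Defs
begin

text \<open>Write \<open>p = \<xi>(\<tau>)\<close>. Every later point \<open>y = \<xi>(t)\<close>, \<open>t \<ge> T\<close>, is seen from \<open>p\<close> within
  \<open>arccos 3\<epsilon>\<close> of the direction \<open>gb\<close>, whereas \<open>x\<close> is seen almost opposite to it; by the triangle
  inequality for angles the angle at \<open>p\<close> of the triangle \<open>x p y\<close> is at least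
  \<open>\<pi> - 2 arcsin (\<epsilon>/2) - arccos 3\<epsilon>\<close>. In a CAT(0) space angles are bounded by the angles of
  the Euclidean comparison triangle, and planar trigonometry then shows that the projection
  \<open>P\<^sub>\<gamma>(log\<^sub>x y)\<close> exceeds \<open>P\<^sub>\<gamma>(log\<^sub>x p)\<close> by at least \<open>\<epsilon> d(p,y)\<close>, which by self-contraction is
  at least \<open>(\<epsilon>/2) d(p, \<xi>(T))\<close>. Hence \<open>\<Pi>\<^sub>\<gamma>(\<Xi>(T))\<close> lies that far above the point
  \<open>P\<^sub>\<gamma>(log\<^sub>x p)\<close> of \<open>\<Pi>\<^sub>\<gamma>(\<Xi>(\<tau>)) \<supseteq> \<Pi>\<^sub>\<gamma>(\<Xi>(T))\<close>.\<close>

section \<open>Plane trigonometry\<close>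

definition tri_cos :: "real \<Rightarrow> real \<Rightarrow> real \<Rightarrow> real" where
  "tri_cos a b c = (a\<^sup>2 + b\<^sup>2 - c\<^sup>2) / (2 * a * b)"

definition tri_side :: "real \<Rightarrow> real \<Rightarrow> real \<Rightarrow> real" where
  "tri_side a b \<gamma> = sqrt (a\<^sup>2 + b\<^sup>2 - 2 * a * b * cos \<gamma>)"

lemma tri_cos_bounds:
  assumes "a > 0" "b > 0" "\<bar>a - b\<bar> \<le> c" "c \<le> a + b"
  shows "-1 \<le> tri_cos a b c" "tri_cos a b c \<le> 1"
proof -
  have ab: "2 * a * b > 0" using assms by simp
  have "c\<^sup>2 \<le> (a + b)\<^sup>2" using assms by (intro power_mono) auto
  then show "-1 \<le> tri_cos a b c"
    unfolding tri_cos_def using ab by (simp add: field_simps power2_eq_square)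
  have "(a - b)\<^sup>2 \<le> c\<^sup>2" using assms by (metis abs_le_square_iff abs_of_nonneg abs_ge_zero order_trans)
  then show "tri_cos a b c \<le> 1"
    unfolding tri_cos_def using ab by (simp add: field_simps power2_eq_square)
qed

lemma tri_side_eq_cmod: "tri_side a b \<gamma> = cmod (complex_of_real a - complex_of_real b * cis \<gamma>)"
proof -
  have "(a - b * cos \<gamma>)\<^sup>2 + (b * sin \<gamma>)\<^sup>2 = a\<^sup>2 + b\<^sup>2 - 2 * a * b * cos \<gamma>"
    using sin_cos_squared_add[of \<gamma>] by algebra
  then show ?thesis unfolding tri_side_def cmod_def by simp
qed

lemma tri_side_le_iff:
  assumes "a > 0" "b > 0" "0 \<le> \<gamma>" "\<gamma> \<le> pi" "0 \<le> \<gamma>'" "\<gamma>' \<le> pi"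
  shows "tri_side a b \<gamma> \<le> tri_side a b \<gamma>' \<longleftrightarrow> \<gamma> \<le> \<gamma>'"
proof -
  have "tri_side a b \<gamma> \<le> tri_side a b \<gamma>' \<longleftrightarrow> cos \<gamma>' \<le> cos \<gamma>"
    unfolding tri_side_def using assms by simp
  also have "\<dots> \<longleftrightarrow> \<gamma> \<le> \<gamma>'" using assms by (simp add: cos_mono_le_eq)
  finally show ?thesis .
qed

lemma ray_meets_segment:
  assumes a: "a > 0" and c: "c > 0" and \<beta>: "0 \<le> \<beta>1" "0 \<le> \<beta>2" "\<beta>1 + \<beta>2 < pi"
    and nondeg: "\<beta>1 \<noteq> 0 \<or> \<beta>2 \<noteq> 0"
  obtains \<mu> r where "0 \<le> \<mu>" "\<mu> \<le> 1" "0 < r"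
    "complex_of_real (1 - \<mu>) * complex_of_real a + complex_of_real \<mu> * (complex_of_real c * cis (\<beta>1 + \<beta>2))
       = complex_of_real r * cis \<beta>1"
proof -
  define \<beta> where "\<beta> = \<beta>1 + \<beta>2"
  have sin_pos: "sin \<beta>1 \<ge> 0" "sin \<beta>2 \<ge> 0" "sin \<beta> > 0"
    using nondeg \<beta> by (auto simp: \<beta>_def intro!: sin_ge_zero sin_gt_zero)
  define D where "D = a * sin \<beta>1 + c * sin \<beta>2"
  have "sin \<beta>1 > 0 \<or> sin \<beta>2 > 0" using nondeg \<beta> by (auto intro!: sin_gt_zero)
  then have D: "D > 0" unfolding D_def using sin_pos a c by (auto intro: add_pos_nonneg add_nonneg_pos)
  define \<mu> where "\<mu> = a * sin \<beta>1 / D"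
  define r where "r = a * c * sin \<beta> / D"
  have \<mu>: "0 \<le> \<mu>" "\<mu> \<le> 1" "1 - \<mu> = c * sin \<beta>2 / D"
    unfolding \<mu>_def using D sin_pos a c by (auto simp: D_def field_simps)
  have sin_\<beta>2: "sin \<beta>2 = sin \<beta> * cos \<beta>1 - cos \<beta> * sin \<beta>1"
    unfolding \<beta>_def by (metis add_diff_cancel_left' sin_diff)
  have "(1 - \<mu>) * a + \<mu> * (c * cos \<beta>) = r * cos \<beta>1"
    unfolding \<mu>(3) unfolding \<mu>_def r_def sin_\<beta>2 using D by (simp add: field_simps)
  moreover have "\<mu> * (c * sin \<beta>) = r * sin \<beta>1"
    unfolding \<mu>_def r_def by simp
  moreover have "r > 0" unfolding r_def using a c D sin_pos by simp
  ultimately show ?thesis using \<mu>(1,2) by (intro that[of \<mu> r]) (simp_all add: complex_eq_iff \<beta>_def)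
qed

text \<open>The ray at angle \<open>\<beta>1\<close> cuts the side opposite the angle \<open>\<beta>1 + \<beta>2\<close> of a triangle with
  sides \<open>a\<close>, \<open>c\<close> at distance \<open>r\<close> from the apex.\<close>
lemma tri_side_split:
  assumes a: "a > 0" and c: "c > 0" and \<beta>: "0 \<le> \<beta>1" "0 \<le> \<beta>2" "\<beta>1 + \<beta>2 < pi"
  obtains r where "0 < r" "r \<le> max a c" "tri_side a r \<beta>1 + tri_side r c \<beta>2 = tri_side a c (\<beta>1 + \<beta>2)"
proof (cases "\<beta>1 = 0 \<and> \<beta>2 = 0")
  case True
  then show ?thesis using a by (intro that[of a]) (auto simp: tri_side_def power2_eq_square)
next
  case False
  then obtain \<mu> r where \<mu>: "0 \<le> \<mu>" "\<mu> \<le> 1" and r: "0 < r"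
    and Z: "complex_of_real (1 - \<mu>) * complex_of_real a + complex_of_real \<mu> * (complex_of_real c * cis (\<beta>1 + \<beta>2))
       = complex_of_real r * cis \<beta>1"
    using ray_meets_segment[OF a c \<beta>] by blast
  define A C where "A = complex_of_real a" and "C = complex_of_real c * cis (\<beta>1 + \<beta>2)"
  have "tri_side a r \<beta>1 = \<mu> * cmod (A - C)"
  proof -
    have "A - complex_of_real r * cis \<beta>1 = complex_of_real \<mu> * (A - C)"
      unfolding Z[symmetric] A_def C_def by (simp add: algebra_simps)
    then show ?thesis unfolding tri_side_eq_cmod A_def using \<mu> by (simp add: norm_mult)
  qed
  moreover have "tri_side r c \<beta>2 = (1 - \<mu>) * cmod (A - C)"
  proof -
    have "cis \<beta>1 * (complex_of_real r - complex_of_real c * cis \<beta>2) = complex_of_real r * cis \<beta>1 - C"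
      unfolding C_def by (simp add: algebra_simps cis_mult)
    also have "\<dots> = complex_of_real (1 - \<mu>) * (A - C)" unfolding Z[symmetric] A_def C_def by (simp add: algebra_simps)
    finally show ?thesis
      unfolding tri_side_eq_cmod using \<mu> by (metis abs_of_nonneg diff_ge_0_iff_ge norm_cis norm_mult
          norm_of_real mult_1)
  qed
  moreover have "r \<le> max a c"
  proof -
    have "r = cmod (complex_of_real r * cis \<beta>1)" using r by (simp add: norm_mult)
    also have "\<dots> = cmod (complex_of_real (1 - \<mu>) * A + complex_of_real \<mu> * C)"
      unfolding Z A_def C_def ..
    also have "\<dots> \<le> cmod (complex_of_real (1 - \<mu>) * A) + cmod (complex_of_real \<mu> * C)"
      by (rule norm_triangle_ineq)
    also have "\<dots> = (1 - \<mu>) * a + \<mu> * c"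
      unfolding A_def C_def using \<mu> a c by (simp add: norm_mult del: of_real_diff)
    also have "\<dots> \<le> max a c" using \<mu> by (intro convex_bound_le) auto
    finally show ?thesis .
  qed
  ultimately show ?thesis using r
    by (intro that[of r]) (auto simp: algebra_simps tri_side_eq_cmod[of a c] A_def C_def)
qed

text \<open>Read \<open>a = d(x,p)\<close>, \<open>b = d(x,y)\<close>, \<open>r = d(p,y)\<close>: \<open>-c\<close> bounds the cosine of the angle
  at \<open>p\<close>, while \<open>\<theta>\<close> and \<open>\<phi>\<close> are the angles at \<open>x\<close> between a fixed direction and \<open>p\<close>, resp. \<open>y\<close>.\<close>
lemma tri_cos_projection_gain:
  fixes a b r c \<theta> \<phi> :: real
  assumes pos: "a > 0" "b > 0" "r > 0"
    and X: "-1 \<le> tri_cos a b r" "tri_cos a b r \<le> 1"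
    and P: "tri_cos a r b \<le> - c" and c: "c > 0"
    and \<theta>: "0 \<le> \<theta>" "\<theta> \<le> pi / 2" and \<phi>: "0 \<le> \<phi>" "\<phi> \<le> \<theta> + arccos (tri_cos a b r)"
  shows "a * cos \<theta> + r * (c * cos \<theta> - sin \<theta>) \<le> b * cos \<phi>"
proof -
  define X P where "X = tri_cos a b r" and "P = tri_cos a r b"
  have bX: "b * X = a - r * P" unfolding X_def P_def tri_cos_def using pos
    by (simp add: field_simps power2_eq_square)
  have "r * P \<le> r * (- c)" using P pos unfolding P_def by (intro mult_left_mono) auto
  then have bX_ge: "a + r * c \<le> b * X" using bX by simp
  moreover have "0 < r * c" using pos c by simp
  ultimately have "0 < b * X" using pos by linarith
  then have "X > 0" using pos by (simp add: zero_less_mult_iff)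
  have b_sin: "b * sqrt (1 - X\<^sup>2) \<le> r"
  proof -
    have b2: "b\<^sup>2 = a\<^sup>2 + r\<^sup>2 - 2 * a * r * P" unfolding P_def tri_cos_def using pos by (simp add: field_simps)
    have "b\<^sup>2 * (1 - X\<^sup>2) = b\<^sup>2 - (b * X)\<^sup>2" by (simp add: power2_eq_square algebra_simps)
    also have "\<dots> = r\<^sup>2 * (1 - P\<^sup>2)" unfolding bX b2 by (simp add: power2_eq_square algebra_simps)
    also have "\<dots> \<le> r\<^sup>2" by (simp add: mult_left_le)
    finally have "sqrt (b\<^sup>2 * (1 - X\<^sup>2)) \<le> sqrt (r\<^sup>2)" by (rule real_sqrt_le_mono)
    then show ?thesis using pos by (simp add: real_sqrt_mult)
  qed
  define \<gamma> where "\<gamma> = arccos X"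
  have \<gamma>: "0 \<le> \<gamma>" "\<gamma> \<le> pi / 2" "cos \<gamma> = X" "sin \<gamma> = sqrt (1 - X\<^sup>2)"
    using X \<open>X > 0\<close> arccos_le_arccos[of 0 X] unfolding \<gamma>_def X_def
    by (auto simp: arccos_lbound sin_arccos)
  have "cos (\<theta> + \<gamma>) \<le> cos \<phi>" using \<theta> \<phi> \<gamma> unfolding \<gamma>_def X_def by (subst cos_mono_le_eq) auto
  then have "cos \<theta> * X - sin \<theta> * sqrt (1 - X\<^sup>2) \<le> cos \<phi>" unfolding cos_add \<gamma> .
  then have "b * (cos \<theta> * X - sin \<theta> * sqrt (1 - X\<^sup>2)) \<le> b * cos \<phi>"
    using pos by (intro mult_left_mono) auto
  then have "cos \<theta> * (b * X) - sin \<theta> * (b * sqrt (1 - X\<^sup>2)) \<le> b * cos \<phi>"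
    by (simp add: algebra_simps)
  moreover have "cos \<theta> * (a + r * c) \<le> cos \<theta> * (b * X)"
    using bX_ge \<theta> by (intro mult_left_mono cos_ge_zero) auto
  moreover have "sin \<theta> * (b * sqrt (1 - X\<^sup>2)) \<le> sin \<theta> * r"
    using b_sin \<theta> by (intro mult_left_mono sin_ge_zero) auto
  ultimately show ?thesis by (simp add: algebra_simps)
qed

lemma sqrt_one_minus_le:
  assumes "x \<le> 1"
  shows "sqrt (1 - x) \<le> 1 - x / 2"
proof -
  have "1 - x \<le> (1 - x / 2)\<^sup>2" by (simp add: power2_eq_square algebra_simps)
  then show ?thesis using assms real_sqrt_le_mono[of "1 - x" "(1 - x / 2)\<^sup>2"] by simp
qed

lemma arcsin_arccos_estimates:
  fixes e :: real
  assumes e: "0 < e" "e \<le> 1 / 6"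
  defines "\<delta> \<equiv> 2 * arcsin (e / 2)" and "\<alpha> \<equiv> arccos (3 * e)"
  shows "0 \<le> \<delta>" "\<delta> < pi / 2" "0 \<le> \<alpha>" "\<alpha> \<le> pi / 2" "e \<le> cos (\<delta> + \<alpha>) * cos \<delta> - sin \<delta>"
proof -
  define q where "q = e\<^sup>2 / 2"
  have q: "0 \<le> q" "q \<le> 1 / 72"
    using e mult_mono[of e "1/6" e "1/6"] unfolding q_def by (auto simp: power2_eq_square)
  have sin_half: "sin (arcsin (e / 2)) = e / 2" using e by simp
  have cos_\<delta>: "cos \<delta> = 1 - q"
    unfolding \<delta>_def q_def cos_double_sin sin_half by (simp add: power2_eq_square)
  have sin_\<delta>: "0 \<le> sin \<delta>" "sin \<delta> \<le> e"
  proof -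
    have "0 \<le> cos (arcsin (e / 2))" using e arcsin_bounded[of "e / 2"] by (intro cos_ge_zero) auto
    then show "0 \<le> sin \<delta>" "sin \<delta> \<le> e"
      unfolding \<delta>_def sin_double sin_half using e mult_left_le[OF cos_le_one, of e] by auto
  qed
  have cos_\<alpha>: "cos \<alpha> = 3 * e" unfolding \<alpha>_def using e by simp
  have sin_\<alpha>: "0 \<le> sin \<alpha>" "sin \<alpha> \<le> 1 - 9 * q"
  proof -
    have "sin \<alpha> = sqrt (1 - (3 * e)\<^sup>2)" unfolding \<alpha>_def using e by (simp add: sin_arccos)
    moreover have "(3 * e)\<^sup>2 \<le> 1" using q unfolding q_def by (simp add: power2_eq_square)
    ultimately show "0 \<le> sin \<alpha>" "sin \<alpha> \<le> 1 - 9 * q"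
      using sqrt_one_minus_le[of "(3 * e)\<^sup>2"] unfolding q_def by (auto simp: power2_eq_square)
  qed
  have "sin \<delta> * sin \<alpha> \<le> e * (1 - 9 * q)" using sin_\<delta> sin_\<alpha> by (intro mult_mono) auto
  then have K: "e * (2 + 6 * q) \<le> cos (\<delta> + \<alpha>)"
    unfolding cos_add cos_\<delta> cos_\<alpha> by (simp add: algebra_simps)
  have "e * (2 + 6 * q) * (1 - q) \<le> cos (\<delta> + \<alpha>) * cos \<delta>"
    unfolding cos_\<delta> using K q e by (intro mult_right_mono) auto
  moreover have "e \<le> e * (2 + 6 * q) * (1 - q) - e"
  proof -
    have "0 \<le> e * q * (4 - 6 * q)" using e q by simp
    then show ?thesis by (simp add: algebra_simps)
  qed
  ultimately show "e \<le> cos (\<delta> + \<alpha>) * cos \<delta> - sin \<delta>" using sin_\<delta> by linarith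
  show "0 \<le> \<delta>" unfolding \<delta>_def using e arcsin_le_mono[of 0 "e / 2"] by simp
  moreover have "\<delta> \<le> pi" unfolding \<delta>_def using arcsin_ubound[of "e / 2"] e by simp
  moreover have "cos (pi / 2) < cos \<delta>" unfolding cos_\<delta> using q by simp
  ultimately show "\<delta> < pi / 2" by (subst (asm) cos_mono_less_eq) auto
  show "0 \<le> \<alpha>" unfolding \<alpha>_def using e by (intro arccos_lbound) auto
  have "arccos (3 * e) \<le> arccos 0" using e by (intro arccos_le_arccos) auto
  then show "\<alpha> \<le> pi / 2" unfolding \<alpha>_def by simp
qed

lemma arcsin_arccos_gain:
  fixes e \<theta> :: real
  assumes e: "0 < e" "e \<le> 1 / 6" and \<theta>: "0 \<le> \<theta>" "\<theta> \<le> 2 * arcsin (e / 2)"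
  defines "\<delta> \<equiv> 2 * arcsin (e / 2)" and "\<alpha> \<equiv> arccos (3 * e)"
  shows "0 < cos (\<delta> + \<alpha>)" "e \<le> cos (\<delta> + \<alpha>) * cos \<theta> - sin \<theta>"
proof -
  note est = arcsin_arccos_estimates[OF e, folded \<delta>_def \<alpha>_def]
  have "0 \<le> sin \<delta>" using est by (intro sin_ge_zero) auto
  then have "0 < cos (\<delta> + \<alpha>) * cos \<delta>" using est(5) e by linarith
  moreover have "0 < cos \<delta>" using est by (intro cos_gt_zero_pi) auto
  ultimately show K: "0 < cos (\<delta> + \<alpha>)" by (simp add: zero_less_mult_iff)
  have "cos \<delta> \<le> cos \<theta>" using \<theta> est unfolding \<delta>_def by (subst cos_mono_le_eq) auto
  moreover have "sin \<theta> \<le> sin \<delta>" using \<theta> est unfolding \<delta>_def by (intro sin_monotone_2pi_le) auto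
  ultimately show "e \<le> cos (\<delta> + \<alpha>) * cos \<theta> - sin \<theta>"
    using est(5) mult_left_mono[of "cos \<delta>" "cos \<theta>" "cos (\<delta> + \<alpha>)"] K by linarith
qed

section \<open>Geodesics and comparison angles\<close>

lemma CAT0_D:
  assumes "CAT0 TYPE('a::metric_space)" "geodesic_path g (y::'a) z" "s \<in> {0..1}"
  shows "(dist x (g s))\<^sup>2 \<le> (1 - s) * (dist x y)\<^sup>2 + s * (dist x z)\<^sup>2 - (1 - s) * s * (dist y z)\<^sup>2"
  using assms unfolding CAT0_def by blast

lemma geodesic_path_geod:
  assumes "CAT0 TYPE('a::metric_space)"
  shows "geodesic_path (geod (y::'a) z) y z"
proof -
  have "\<exists>g. geodesic_path g y z" using assms unfolding CAT0_def by blast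
  then show ?thesis unfolding geod_def by (rule someI_ex)
qed

lemma geodesic_pathD:
  assumes "geodesic_path g y z"
  shows "g 0 = y" "g 1 = z"
    "\<And>s t. s \<in> {0..1} \<Longrightarrow> t \<in> {0..1} \<Longrightarrow> dist (g s) (g t) = \<bar>s - t\<bar> * dist y z"
  using assms unfolding geodesic_path_def by blast+

lemma dist_start_geodesic_path:
  assumes "geodesic_path g y z" "s \<in> {0..1}"
  shows "dist y (g s) = s * dist y z"
proof -
  have "dist (g 0) (g s) = \<bar>0 - s\<bar> * dist y z"
    using geodesic_pathD(3)[OF assms(1), of 0 s] assms(2) by simp
  then show ?thesis using geodesic_pathD(1)[OF assms(1)] assms(2) by simp
qed

lemma geodesic_path_initial_segment:
  assumes g: "geodesic_path g y z" and s': "s' \<in> {0..1}"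
  shows "geodesic_path (\<lambda>u. g (u * s')) y (g s')"
  unfolding geodesic_path_def
proof (intro conjI ballI)
  show "g (0 * s') = y" using geodesic_pathD(1)[OF g] by simp
  show "g (1 * s') = g s'" by simp
  fix s t :: real assume st: "s \<in> {0..1}" "t \<in> {0..1}"
  then have "s * s' \<in> {0..1}" "t * s' \<in> {0..1}" using s' by (auto simp: mult_le_one)
  then have "dist (g (s * s')) (g (t * s')) = \<bar>s * s' - t * s'\<bar> * dist y z"
    using geodesic_pathD(3)[OF g] by blast
  also have "\<dots> = \<bar>s - t\<bar> * (s' * dist y z)"
    using s' by (simp add: abs_mult left_diff_distrib[symmetric])
  finally show "dist (g (s * s')) (g (t * s')) = \<bar>s - t\<bar> * dist y (g s')"
    using dist_start_geodesic_path[OF g s'] by simp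
qed

lemma dist_geod:
  assumes "CAT0 TYPE('a::metric_space)" "s \<in> {0..1}"
  shows "dist x (geod (x::'a) y s) = s * dist x y"
  using dist_start_geodesic_path[OF geodesic_path_geod[OF assms(1)] assms(2)] .

lemma geod_neq_start:
  assumes "CAT0 TYPE('a::metric_space)" "0 < s" "s \<le> 1" "y \<noteq> x"
  shows "geod (x::'a) y s \<noteq> x"
  using dist_geod[OF assms(1), of s x y] assms by (metis atLeastAtMost_iff dist_self
      less_eq_real_def mult_eq_0_iff zero_less_dist_iff)

lemma geod_1:
  assumes "CAT0 TYPE('a::metric_space)"
  shows "geod (x::'a) y 1 = y"
  using geodesic_pathD(2)[OF geodesic_path_geod[OF assms]] .

lemma tri_cos_dist_bounds:
  fixes x y z :: "'a::metric_space"
  assumes "y \<noteq> x" "z \<noteq> x"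
  shows "-1 \<le> tri_cos (dist x y) (dist x z) (dist y z)" "tri_cos (dist x y) (dist x z) (dist y z) \<le> 1"
proof -
  have "\<bar>dist x y - dist x z\<bar> \<le> dist y z"
    by (metis abs_le_iff dist_commute dist_triangle2 dist_triangle3 diff_le_eq minus_diff_eq)
  moreover have "dist y z \<le> dist x y + dist x z" by (metis dist_commute dist_triangle)
  ultimately show "-1 \<le> tri_cos (dist x y) (dist x z) (dist y z)"
    "tri_cos (dist x y) (dist x z) (dist y z) \<le> 1"
    using tri_cos_bounds assms by auto
qed

lemma cmp_angle_tri_cos: "cmp_angle x y z = arccos (tri_cos (dist x y) (dist x z) (dist y z))"
  unfolding cmp_angle_def tri_cos_def by simp

lemma cmp_angle_bounds:
  fixes x y z :: "'a::metric_space"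
  assumes "y \<noteq> x" "z \<noteq> x"
  shows "0 \<le> cmp_angle x y z" "cmp_angle x y z \<le> pi"
  unfolding cmp_angle_tri_cos by (simp_all add: arccos_lbound arccos_ubound tri_cos_dist_bounds[OF assms])

lemma cmp_angle_commute: "cmp_angle x y z = cmp_angle x z y"
  unfolding cmp_angle_def by (simp add: dist_commute add.commute mult.commute mult.left_commute)

lemma dist_eq_tri_side_cmp_angle:
  fixes x y z :: "'a::metric_space"
  assumes "y \<noteq> x" "z \<noteq> x"
  shows "dist y z = tri_side (dist x y) (dist x z) (cmp_angle x y z)"
proof -
  have "cos (cmp_angle x y z) = tri_cos (dist x y) (dist x z) (dist y z)"
    unfolding cmp_angle_tri_cos using tri_cos_dist_bounds[OF assms] by simp
  then have "(dist x y)\<^sup>2 + (dist x z)\<^sup>2 - 2 * dist x y * dist x z * cos (cmp_angle x y z) = (dist y z)\<^sup>2"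
    unfolding tri_cos_def using assms by (simp add: field_simps)
  then show ?thesis unfolding tri_side_def by simp
qed

lemma cmp_angle_geodesic_path_mono:
  assumes cat: "CAT0 TYPE('a::metric_space)" and g: "geodesic_path g (x::'a) q"
    and qx: "q \<noteq> x" and wx: "w \<noteq> x" and s: "0 < s" "s \<le> 1"
  shows "cmp_angle x (g s) w \<le> cmp_angle x q w"
proof -
  define A c e m where "A = dist x q" and "c = dist x w" and "e = dist q w" and "m = dist (g s) w"
  have pos: "A > 0" "c > 0" using qx wx by (simp_all add: A_def c_def)
  have d1: "dist x (g s) = s * A" using dist_start_geodesic_path[OF g, of s] s by (simp add: A_def)
  then have gx: "g s \<noteq> x" using pos s by (metis dist_self mult_pos_pos less_irrefl)
  have "m\<^sup>2 \<le> (1 - s) * c\<^sup>2 + s * e\<^sup>2 - (1 - s) * s * A\<^sup>2"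
    using CAT0_D[OF cat g, of s w] s unfolding m_def c_def e_def A_def by (simp add: dist_commute)
  then have "s * (A\<^sup>2 + c\<^sup>2 - e\<^sup>2) / (2 * (s * A) * c) \<le> ((s * A)\<^sup>2 + c\<^sup>2 - m\<^sup>2) / (2 * (s * A) * c)"
    using pos s by (intro divide_right_mono) (auto simp: power2_eq_square algebra_simps)
  moreover have "s * (A\<^sup>2 + c\<^sup>2 - e\<^sup>2) / (2 * (s * A) * c) = tri_cos A c e"
    unfolding tri_cos_def using pos s by (simp add: field_simps)
  ultimately have "tri_cos A c e \<le> tri_cos (s * A) c m" unfolding tri_cos_def by simp
  moreover have "-1 \<le> tri_cos A c e" "tri_cos (s * A) c m \<le> 1"
    using tri_cos_dist_bounds[OF qx wx] tri_cos_dist_bounds[OF gx wx] d1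
    unfolding A_def c_def e_def m_def by (auto simp: dist_commute)
  ultimately have "arccos (tri_cos (s * A) c m) \<le> arccos (tri_cos A c e)"
    by (intro arccos_le_arccos) auto
  then show ?thesis unfolding cmp_angle_tri_cos using d1 by (simp add: A_def c_def e_def m_def dist_commute)
qed

section \<open>Angles\<close>

lemma tendsto_INF_at_right_0_prod:
  fixes f :: "real \<Rightarrow> real \<Rightarrow> real"
  assumes mono1: "\<And>s s' t. 0 < s \<Longrightarrow> s \<le> s' \<Longrightarrow> s' \<le> 1 \<Longrightarrow> 0 < t \<Longrightarrow> t \<le> 1 \<Longrightarrow> f s t \<le> f s' t"
    and mono2: "\<And>s t t'. 0 < s \<Longrightarrow> s \<le> 1 \<Longrightarrow> 0 < t \<Longrightarrow> t \<le> t' \<Longrightarrow> t' \<le> 1 \<Longrightarrow> f s t \<le> f s t'"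
    and bdd: "bdd_below ((\<lambda>(s, t). f s t) ` ({0<..1} \<times> {0<..1}))"
  shows "((\<lambda>(s, t). f s t) \<longlongrightarrow> (INF (s, t)\<in>{0<..1} \<times> {0<..1}. f s t)) (at_right 0 \<times>\<^sub>F at_right 0)"
proof -
  let ?I = "INF (s, t)\<in>{0<..1} \<times> {0<..1}. f s t"
  have box: "eventually P (at_right 0 \<times>\<^sub>F at_right 0)"
    if "0 < a" "0 < b" "\<And>s t. s \<in> {0<..<a} \<Longrightarrow> t \<in> {0<..<b} \<Longrightarrow> P (s, t)" for a b :: real and P
    unfolding eventually_prod_filter
  proof (intro exI conjI allI impI)
    show "eventually (\<lambda>s. s \<in> {0<..<a}) (at_right 0)" "eventually (\<lambda>t. t \<in> {0<..<b}) (at_right 0)"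
      using that by (blast intro: eventually_at_right_real)+
  qed (use that in auto)
  show ?thesis
  proof (rule order_tendstoI)
    fix c assume "c < ?I"
    then have "c < f s t" if "s \<in> {0<..1}" "t \<in> {0<..1}" for s t
      using cINF_lower[OF bdd, of "(s, t)"] that by fastforce
    then show "eventually (\<lambda>p. c < (\<lambda>(s, t). f s t) p) (at_right 0 \<times>\<^sub>F at_right 0)"
      by (intro box[of 1 1]) auto
  next
    fix c assume "?I < c"
    moreover have "{0<..1} \<times> {0<..1} \<noteq> ({} :: (real \<times> real) set)" by auto
    ultimately obtain s0 t0 where st0: "s0 \<in> {0<..1}" "t0 \<in> {0<..1}" "f s0 t0 < c"
      using cINF_less_iff[OF _ bdd] by fastforce
    have "f s t < c" if "s \<in> {0<..<s0}" "t \<in> {0<..<t0}" for s t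
    proof -
      have "f s t \<le> f s0 t" using that st0 by (intro mono1) auto
      also have "\<dots> \<le> f s0 t0" using that st0 by (intro mono2) auto
      finally show ?thesis using st0 by simp
    qed
    then show "eventually (\<lambda>p. (\<lambda>(s, t). f s t) p < c) (at_right 0 \<times>\<^sub>F at_right 0)"
      using st0 by (intro box[of s0 t0]) auto
  qed
qed

definition geod_cmp_angle :: "'a::metric_space \<Rightarrow> 'a \<Rightarrow> 'a \<Rightarrow> real \<Rightarrow> real \<Rightarrow> real" where
  "geod_cmp_angle x y z s t = cmp_angle x (geod x y s) (geod x z t)"

lemma geod_cmp_angle_mono_left:
  assumes cat: "CAT0 TYPE('a::metric_space)" and yx: "y \<noteq> (x::'a)" and zx: "z \<noteq> x"
    and s: "0 < s" "s \<le> s'" "s' \<le> 1" and t: "0 < t" "t \<le> 1"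
  shows "geod_cmp_angle x y z s t \<le> geod_cmp_angle x y z s' t"
proof -
  have "geodesic_path (\<lambda>u. geod x y (u * s')) x (geod x y s')"
    using geodesic_path_initial_segment[OF geodesic_path_geod[OF cat]] s by simp
  from cmp_angle_geodesic_path_mono[OF cat this, of "geod x z t" "s / s'"]
  show ?thesis unfolding geod_cmp_angle_def
    using s t geod_neq_start[OF cat _ _ yx, of s'] geod_neq_start[OF cat _ _ zx, of t] by simp
qed

lemma geod_cmp_angle_mono_right:
  assumes cat: "CAT0 TYPE('a::metric_space)" and yx: "y \<noteq> (x::'a)" and zx: "z \<noteq> x"
    and s: "0 < s" "s \<le> 1" and t: "0 < t" "t \<le> t'" "t' \<le> 1"
  shows "geod_cmp_angle x y z s t \<le> geod_cmp_angle x y z s t'"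
  using geod_cmp_angle_mono_left[OF cat zx yx t s] unfolding geod_cmp_angle_def by (simp add: cmp_angle_commute)

lemma geod_cmp_angle_mono:
  assumes cat: "CAT0 TYPE('a::metric_space)" and yx: "y \<noteq> (x::'a)" and zx: "z \<noteq> x"
    and "0 < s" "s \<le> s'" "s' \<le> 1" "0 < t" "t \<le> t'" "t' \<le> 1"
  shows "geod_cmp_angle x y z s t \<le> geod_cmp_angle x y z s' t'"
  using geod_cmp_angle_mono_left[OF cat yx zx, of s s' t] geod_cmp_angle_mono_right[OF cat yx zx, of s' t t']
    assms by simp

lemma geod_cmp_angle_bounds:
  assumes cat: "CAT0 TYPE('a::metric_space)" and yx: "y \<noteq> (x::'a)" and zx: "z \<noteq> x"
    and "0 < s" "s \<le> 1" "0 < t" "t \<le> 1"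
  shows "0 \<le> geod_cmp_angle x y z s t" "geod_cmp_angle x y z s t \<le> pi"
  using cmp_angle_bounds[OF geod_neq_start[OF cat _ _ yx] geod_neq_start[OF cat _ _ zx]] assms
  unfolding geod_cmp_angle_def by auto

lemma dist_geod_geod:
  assumes cat: "CAT0 TYPE('a::metric_space)" and yx: "y \<noteq> (x::'a)" and zx: "z \<noteq> x"
    and "0 < s" "s \<le> 1" "0 < t" "t \<le> 1"
  shows "dist (geod x y s) (geod x z t) = tri_side (s * dist x y) (t * dist x z) (geod_cmp_angle x y z s t)"
  using dist_eq_tri_side_cmp_angle[OF geod_neq_start[OF cat _ _ yx] geod_neq_start[OF cat _ _ zx]]
    dist_geod[OF cat] assms unfolding geod_cmp_angle_def by simp

lemma dist_geod_geod_le_tri_side: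
  assumes cat: "CAT0 TYPE('a::metric_space)" and yx: "y \<noteq> (x::'a)" and zx: "z \<noteq> x"
    and st: "0 < s" "s \<le> s0" "s0 \<le> 1" "0 < t" "t \<le> t0" "t0 \<le> 1"
    and \<beta>: "geod_cmp_angle x y z s0 t0 < \<beta>" "\<beta> \<le> pi"
  shows "dist (geod x y s) (geod x z t) \<le> tri_side (s * dist x y) (t * dist x z) \<beta>"
proof -
  have st1: "s \<le> 1" "t \<le> 1" using st by auto
  have "geod_cmp_angle x y z s t \<le> \<beta>" using geod_cmp_angle_mono[OF cat yx zx st] \<beta>(1) by simp
  then show ?thesis unfolding dist_geod_geod[OF cat yx zx st(1) st1(1) st(4) st1(2)]
    using st yx zx \<beta> geod_cmp_angle_bounds[OF cat yx zx st(1) st1(1) st(4) st1(2)]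
    by (subst tri_side_le_iff) auto
qed

lemma geod_cmp_angles_bdd_below:
  assumes cat: "CAT0 TYPE('a::metric_space)" and yx: "y \<noteq> (x::'a)" and zx: "z \<noteq> x"
  shows "bdd_below ((\<lambda>(s, t). geod_cmp_angle x y z s t) ` ({0<..1} \<times> {0<..1}))"
  using geod_cmp_angle_bounds(1)[OF cat yx zx] by (auto intro!: bdd_belowI[of _ 0])

text \<open>Monotonicity of the comparison angles along geodesics makes the limit in the definition
  of \<open>ang\<close> exist, so that \<open>Lim\<close> does not return a junk value.\<close>
lemma ang_eq_INF:
  assumes cat: "CAT0 TYPE('a::metric_space)" and yx: "y \<noteq> (x::'a)" and zx: "z \<noteq> x"
  shows "ang x y z = (INF (s, t)\<in>{0<..1} \<times> {0<..1}. geod_cmp_angle x y z s t)"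
proof -
  from tendsto_INF_at_right_0_prod[OF geod_cmp_angle_mono_left[OF cat yx zx]
      geod_cmp_angle_mono_right[OF cat yx zx] geod_cmp_angles_bdd_below[OF cat yx zx]]
  have "((\<lambda>(s, t). cmp_angle x (geod x y s) (geod x z t)) \<longlongrightarrow>
      (INF (s, t)\<in>{0<..1} \<times> {0<..1}. geod_cmp_angle x y z s t)) (at_right 0 \<times>\<^sub>F at_right 0)"
    unfolding geod_cmp_angle_def .
  moreover have "\<not> trivial_limit (at_right (0::real) \<times>\<^sub>F at_right (0::real))"
    by (simp add: prod_filter_eq_bot)
  ultimately show ?thesis unfolding ang_def by (rule tendsto_Lim[rotated])
qed

lemma ang_le_geod_cmp_angle:
  assumes cat: "CAT0 TYPE('a::metric_space)" and yx: "y \<noteq> (x::'a)" and zx: "z \<noteq> x"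
    and "s \<in> {0<..1}" "t \<in> {0<..1}"
  shows "ang x y z \<le> geod_cmp_angle x y z s t"
  unfolding ang_eq_INF[OF cat yx zx]
  using cINF_lower[OF geod_cmp_angles_bdd_below[OF cat yx zx], of "(s, t)"] assms(4,5) by simp

lemma geod_cmp_angle_less_if_ang_less:
  assumes cat: "CAT0 TYPE('a::metric_space)" and yx: "y \<noteq> (x::'a)" and zx: "z \<noteq> x"
    and "ang x y z < b"
  obtains s t where "s \<in> {0<..1}" "t \<in> {0<..1}" "geod_cmp_angle x y z s t < b"
proof -
  have "{0<..1} \<times> {0<..1} \<noteq> ({} :: (real \<times> real) set)" by auto
  then show ?thesis
    using assms(4) cINF_less_iff[OF _ geod_cmp_angles_bdd_below[OF cat yx zx]] that
    unfolding ang_eq_INF[OF cat yx zx] by fastforce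
qed

lemma ang_bounds:
  assumes cat: "CAT0 TYPE('a::metric_space)" and yx: "y \<noteq> (x::'a)" and zx: "z \<noteq> x"
  shows "0 \<le> ang x y z" "ang x y z \<le> pi"
proof -
  show "0 \<le> ang x y z" unfolding ang_eq_INF[OF cat yx zx]
    using geod_cmp_angle_bounds(1)[OF cat yx zx] by (intro cINF_greatest) auto
  show "ang x y z \<le> pi"
    using ang_le_geod_cmp_angle[OF cat yx zx, of 1 1] geod_cmp_angle_bounds(2)[OF cat yx zx, of 1 1] by simp
qed

lemma ang_le_cmp_angle:
  assumes cat: "CAT0 TYPE('a::metric_space)" and yx: "y \<noteq> (x::'a)" and zx: "z \<noteq> x"
  shows "ang x y z \<le> cmp_angle x y z"
  using ang_le_geod_cmp_angle[OF cat yx zx, of 1 1] unfolding geod_cmp_angle_def geod_1[OF cat] by simp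

lemma ang_commute:
  assumes cat: "CAT0 TYPE('a::metric_space)" and yx: "y \<noteq> (x::'a)" and zx: "z \<noteq> x"
  shows "ang x y z = ang x z y"
proof -
  have "(\<lambda>(s, t). geod_cmp_angle x y z s t) ` ({0<..1} \<times> {0<..1}) =
      (\<lambda>(s, t). geod_cmp_angle x z y s t) ` ({0<..1} \<times> {0<..1})"
    unfolding geod_cmp_angle_def by (force simp: cmp_angle_commute)
  then show ?thesis unfolding ang_eq_INF[OF cat yx zx] ang_eq_INF[OF cat zx yx] by simp
qed

lemma ang_self:
  assumes cat: "CAT0 TYPE('a::metric_space)" and yx: "y \<noteq> (x::'a)"
  shows "ang x y y = 0"
proof -
  have "cmp_angle x y y = 0" unfolding cmp_angle_def using yx by (simp add: power2_eq_square)
  then show ?thesis using ang_le_cmp_angle[OF cat yx yx] ang_bounds(1)[OF cat yx yx] by simp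
qed

text \<open>Take points on the three geodesics at distances \<open>L\<close>, \<open>r\<close>, \<open>L\<close> from \<open>x\<close>, with \<open>r\<close> from the
  Euclidean construction \<open>tri_side_split\<close>; their mutual distances are bounded by the comparison
  angles, and the triangle inequality among them forces the comparison angle between \<open>y\<close> and \<open>w\<close>
  below \<open>\<beta>1 + \<beta>2\<close>.\<close>
lemma ang_le_add_if_less:
  assumes cat: "CAT0 TYPE('a::metric_space)"
    and yx: "y \<noteq> (x::'a)" and zx: "z \<noteq> x" and wx: "w \<noteq> x"
    and \<beta>: "ang x y z < \<beta>1" "ang x z w < \<beta>2" "\<beta>1 + \<beta>2 < pi"
  shows "ang x y w \<le> \<beta>1 + \<beta>2"
proof -
  have \<beta>_nonneg: "0 \<le> \<beta>1" "0 \<le> \<beta>2" using \<beta> ang_bounds(1)[OF cat yx zx] ang_bounds(1)[OF cat zx wx] by auto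
  obtain s1 u1 where su1: "s1 \<in> {0<..1}" "u1 \<in> {0<..1}" "geod_cmp_angle x y z s1 u1 < \<beta>1"
    using geod_cmp_angle_less_if_ang_less[OF cat yx zx \<beta>(1)] .
  obtain u2 w2 where uw2: "u2 \<in> {0<..1}" "w2 \<in> {0<..1}" "geod_cmp_angle x z w u2 w2 < \<beta>2"
    using geod_cmp_angle_less_if_ang_less[OF cat zx wx \<beta>(2)] .
  define L where "L = Min {s1 * dist x y, u1 * dist x z, u2 * dist x z, w2 * dist x w}"
  have L: "L > 0" unfolding L_def using su1 uw2 yx zx wx by auto
  obtain r where r: "0 < r" "r \<le> L" "tri_side L r \<beta>1 + tri_side r L \<beta>2 = tri_side L L (\<beta>1 + \<beta>2)"
    using tri_side_split[OF L L \<beta>_nonneg \<beta>(3)] by (metis max.idem)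
  define t t' t'' where "t = L / dist x y" and "t' = r / dist x z" and "t'' = L / dist x w"
  have t: "0 < t" "t \<le> s1" "0 < t'" "t' \<le> u1" "t' \<le> u2" "0 < t''" "t'' \<le> w2"
    unfolding t_def t'_def t''_def using L r yx zx wx
    by (auto simp: L_def field_simps min_le_iff_disj)
  have t1: "t \<le> 1" "t' \<le> 1" "t'' \<le> 1" using t su1 uw2 by auto
  have dists: "t * dist x y = L" "t' * dist x z = r" "t'' * dist x w = L"
    unfolding t_def t'_def t''_def using yx zx wx by auto
  have "dist (geod x y t) (geod x z t') \<le> tri_side L r \<beta>1"
    using dist_geod_geod_le_tri_side[OF cat yx zx, of t s1 t' u1 \<beta>1] t su1 \<beta> \<beta>_nonneg
    by (simp add: dists)
  moreover have "dist (geod x z t') (geod x w t'') \<le> tri_side r L \<beta>2"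
    using dist_geod_geod_le_tri_side[OF cat zx wx, of t' u2 t'' w2 \<beta>2] t uw2 \<beta> \<beta>_nonneg
    by (simp add: dists)
  ultimately have "tri_side L L (geod_cmp_angle x y w t t'') \<le> tri_side L L (\<beta>1 + \<beta>2)"
    using dist_triangle[of "geod x y t" "geod x w t''" "geod x z t'"] r(3)
    unfolding dist_geod_geod[OF cat yx wx t(1) t1(1) t(6) t1(3)] dists by linarith
  then have "geod_cmp_angle x y w t t'' \<le> \<beta>1 + \<beta>2"
    using L \<beta> \<beta>_nonneg geod_cmp_angle_bounds[OF cat yx wx t(1) t1(1) t(6) t1(3)]
    by (subst (asm) tri_side_le_iff) auto
  then show ?thesis using ang_le_geod_cmp_angle[OF cat yx wx, of t t''] t t1 by simp
qed

lemma ang_triangle: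
  assumes cat: "CAT0 TYPE('a::metric_space)"
    and yx: "y \<noteq> (x::'a)" and zx: "z \<noteq> x" and wx: "w \<noteq> x"
  shows "ang x y w \<le> ang x y z + ang x z w"
proof (rule field_le_epsilon)
  fix e :: real assume e: "0 < e"
  show "ang x y w \<le> ang x y z + ang x z w + e"
  proof (cases "ang x y z + ang x z w + e < pi")
    case True
    then show ?thesis
      using ang_le_add_if_less[OF cat yx zx wx, of "ang x y z + e / 2" "ang x z w + e / 2"] e by simp
  next
    case False
    then show ?thesis using ang_bounds(2)[OF cat yx wx] by simp
  qed
qed

section \<open>The space of directions\<close>

lemma dirsD:
  assumes "u \<in> dirs x"
  shows "\<And>n. u n \<noteq> x" "\<And>e. e > 0 \<Longrightarrow> \<exists>N. \<forall>m\<ge>N. \<forall>n\<ge>N. ang x (u m) (u n) < e"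
  using assms unfolding dirs_def by auto

lemma dir_in_dirs:
  assumes cat: "CAT0 TYPE('a::metric_space)" and yx: "y \<noteq> (x::'a)"
  shows "dir y \<in> dirs x"
  unfolding dirs_def dir_def using ang_self[OF cat yx] yx by auto

lemma dang_dir: "dang x (dir y) (dir z) = ang x y z"
  unfolding dang_def dir_def by simp

lemma LIMSEQ_ang_dang:
  assumes cat: "CAT0 TYPE('a::metric_space)" and u: "u \<in> dirs (x::'a)" and v: "v \<in> dirs x"
  shows "(\<lambda>n. ang x (u n) (v n)) \<longlonglongrightarrow> dang x u v"
proof -
  have un: "\<And>n. u n \<noteq> x" and vn: "\<And>n. v n \<noteq> x" using dirsD(1) u v by auto
  have "Cauchy (\<lambda>n. ang x (u n) (v n))"
  proof (rule CauchyI)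
    fix e :: real assume e: "0 < e"
    obtain N1 where N1: "\<forall>m\<ge>N1. \<forall>n\<ge>N1. ang x (u m) (u n) < e / 2" using dirsD(2)[OF u, of "e / 2"] e by auto
    obtain N2 where N2: "\<forall>m\<ge>N2. \<forall>n\<ge>N2. ang x (v m) (v n) < e / 2" using dirsD(2)[OF v, of "e / 2"] e by auto
    have tri: "ang x (u m) (v m) \<le> ang x (u m) (u n) + ang x (v n) (v m) + ang x (u n) (v n)" for m n
      using ang_triangle[OF cat un[of m] un[of n] vn[of m]] ang_triangle[OF cat un[of n] vn[of n] vn[of m]]
      by simp
    show "\<exists>M. \<forall>m\<ge>M. \<forall>n\<ge>M. norm (ang x (u m) (v m) - ang x (u n) (v n)) < e"
    proof (intro exI allI impI)
      fix m n assume "max N1 N2 \<le> m" "max N1 N2 \<le> n"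
      then have "ang x (u m) (u n) < e / 2" "ang x (v n) (v m) < e / 2"
        "ang x (u n) (u m) < e / 2" "ang x (v m) (v n) < e / 2"
        using N1 N2 by auto
      then show "norm (ang x (u m) (v m) - ang x (u n) (v n)) < e"
        using tri[of m n] tri[of n m] by auto
    qed
  qed
  then show ?thesis unfolding dang_def Cauchy_convergent_iff convergent_LIMSEQ_iff .
qed

lemma dang_triangle:
  assumes cat: "CAT0 TYPE('a::metric_space)"
    and u: "u \<in> dirs (x::'a)" and v: "v \<in> dirs x" and w: "w \<in> dirs x"
  shows "dang x u w \<le> dang x u v + dang x v w"
proof (rule LIMSEQ_le[OF LIMSEQ_ang_dang[OF cat u w] tendsto_add[OF LIMSEQ_ang_dang[OF cat u v] LIMSEQ_ang_dang[OF cat v w]]])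
  show "\<exists>N. \<forall>n\<ge>N. ang x (u n) (w n) \<le> ang x (u n) (v n) + ang x (v n) (w n)"
    using ang_triangle[OF cat dirsD(1)[OF u] dirsD(1)[OF v] dirsD(1)[OF w]] by simp
qed

lemma dang_commute:
  assumes cat: "CAT0 TYPE('a::metric_space)" and u: "u \<in> dirs (x::'a)" and v: "v \<in> dirs x"
  shows "dang x u v = dang x v u"
  unfolding dang_def using ang_commute[OF cat dirsD(1)[OF u] dirsD(1)[OF v]] by simp

lemma dang_nonneg:
  assumes cat: "CAT0 TYPE('a::metric_space)" and u: "u \<in> dirs (x::'a)" and v: "v \<in> dirs x"
  shows "0 \<le> dang x u v"
  using LIMSEQ_le_const[OF LIMSEQ_ang_dang[OF cat u v]]
    ang_bounds(1)[OF cat dirsD(1)[OF u] dirsD(1)[OF v]] by auto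

section \<open>Projections onto a direction\<close>

lemma Plog_increment:
  assumes cat: "CAT0 TYPE('a::metric_space)" and e: "0 < e" "e \<le> 1 / 6"
    and px: "p \<noteq> (x::'a)" and yp: "y \<noteq> p" and g: "g \<in> dirs x" and gb: "gb \<in> dirs p"
    and hp: "pi - 2 * arcsin (e / 2) \<le> dang p (dir x) gb"
    and hy: "dang p gb (dir y) \<le> arccos (3 * e)"
    and hx: "dang x (dir p) g \<le> 2 * arcsin (e / 2)"
  shows "Plog x g p + e * dist p y \<le> Plog x g y"
proof -
  define \<delta> \<alpha> where "\<delta> = 2 * arcsin (e / 2)" and "\<alpha> = arccos (3 * e)"
  note est = arcsin_arccos_estimates[OF e, folded \<delta>_def \<alpha>_def]
  have xp: "x \<noteq> p" using px by auto
  have "dang p (dir x) gb \<le> dang p (dir x) (dir y) + dang p gb (dir y)"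
    using dang_triangle[OF cat dir_in_dirs[OF cat xp] dir_in_dirs[OF cat yp] gb]
      dang_commute[OF cat dir_in_dirs[OF cat yp] gb] by simp
  then have ang_p: "pi - (\<delta> + \<alpha>) \<le> ang p x y" using hp hy unfolding dang_dir \<delta>_def \<alpha>_def by simp
  have yx: "y \<noteq> x" using ang_p ang_self[OF cat xp] est by auto
  define \<theta> \<phi> where "\<theta> = dang x g (dir p)" and "\<phi> = dang x g (dir y)"
  have \<theta>: "0 \<le> \<theta>" "\<theta> \<le> \<delta>"
    using dang_nonneg[OF cat g dir_in_dirs[OF cat px]] hx dang_commute[OF cat g dir_in_dirs[OF cat px]]
    unfolding \<theta>_def \<delta>_def by auto
  have "\<phi> \<le> \<theta> + ang x p y"
    using dang_triangle[OF cat g dir_in_dirs[OF cat px] dir_in_dirs[OF cat yx]]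
    unfolding \<phi>_def \<theta>_def dang_dir .
  then have \<phi>: "0 \<le> \<phi>" "\<phi> \<le> \<theta> + arccos (tri_cos (dist x p) (dist x y) (dist p y))"
    using ang_le_cmp_angle[OF cat px yx] dang_nonneg[OF cat g dir_in_dirs[OF cat yx]]
    unfolding \<phi>_def cmp_angle_tri_cos by auto
  have bounds: "-1 \<le> tri_cos (dist x p) (dist x y) (dist p y)" "tri_cos (dist x p) (dist x y) (dist p y) \<le> 1"
    "-1 \<le> tri_cos (dist x p) (dist p y) (dist x y)" "tri_cos (dist x p) (dist p y) (dist x y) \<le> 1"
    using tri_cos_dist_bounds[OF px yx] tri_cos_dist_bounds[OF xp yp] by (auto simp: dist_commute)
  have "pi - (\<delta> + \<alpha>) \<le> arccos (tri_cos (dist x p) (dist p y) (dist x y))"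
    using ang_p ang_le_cmp_angle[OF cat xp yp] unfolding cmp_angle_tri_cos by (simp add: dist_commute)
  then have "cos (arccos (tri_cos (dist x p) (dist p y) (dist x y))) \<le> cos (pi - (\<delta> + \<alpha>))"
    using est bounds by (subst cos_mono_le_eq) (auto intro: arccos_lbound arccos_ubound)
  then have "tri_cos (dist x p) (dist p y) (dist x y) \<le> - cos (\<delta> + \<alpha>)" using bounds by simp
  from tri_cos_projection_gain[OF _ _ _ bounds(1,2) this _ \<theta>(1) _ \<phi>]
  have "dist x p * cos \<theta> + dist p y * (cos (\<delta> + \<alpha>) * cos \<theta> - sin \<theta>) \<le> dist x y * cos \<phi>"
    using px yx yp est \<theta> arcsin_arccos_gain(1)[OF e] unfolding \<delta>_def \<alpha>_def by auto
  moreover have "e * dist p y \<le> dist p y * (cos (\<delta> + \<alpha>) * cos \<theta> - sin \<theta>)"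
    using mult_left_mono[OF arcsin_arccos_gain(2)[OF e \<theta>[unfolded \<delta>_def]] zero_le_dist[of p y]]
    unfolding \<delta>_def \<alpha>_def by (simp add: mult.commute)
  ultimately show ?thesis unfolding Plog_def \<theta>_def \<phi>_def using px yx by (simp add: dist_commute)
qed

lemma bounded_Plog_image:
  assumes "bounded S"
  shows "bounded (Plog x g ` S)"
proof -
  obtain B where B: "\<And>y. y \<in> S \<Longrightarrow> dist x y \<le> B"
    using assms unfolding bounded_any_center[of _ x] by blast
  have "\<bar>Plog x g y\<bar> \<le> dist x y" for y
    unfolding Plog_def by (auto simp: abs_mult intro: mult_left_le)
  then show ?thesis unfolding bounded_iff using B by (intro exI[of _ B]) (auto intro: order_trans)
qed

lemma PiInt_eq_Inf_Sup:
  assumes "S \<noteq> {}" "bounded (Plog x g ` S)"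
  shows "PiInt x g S = {Inf (Plog x g ` S) .. Sup (Plog x g ` S)}"
proof -
  let ?V = "Plog x g ` S"
  have bdd: "bdd_above ?V" "bdd_below ?V"
    using assms(2) by (simp_all add: bounded_imp_bdd_above bounded_imp_bdd_below)
  have "?V \<subseteq> {Inf ?V .. Sup ?V}" using bdd by (simp add: cInf_lower cSup_upper subset_eq)
  moreover have "{Inf ?V .. Sup ?V} \<subseteq> {a..b}" if "?V \<subseteq> {a..b}" for a b
    using that assms(1) by (auto intro!: cInf_greatest cSup_least)
  ultimately show ?thesis unfolding PiInt_def by blast
qed

lemma measure_PiInt_le_diff:
  assumes "A \<subseteq> B" "A \<noteq> {}" "bounded (Plog x g ` B)" "p \<in> B"
    and gain: "\<And>y. y \<in> A \<Longrightarrow> Plog x g p + c \<le> Plog x g y"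
  shows "measure lebesgue (PiInt x g A) \<le> measure lebesgue (PiInt x g B) - c"
proof -
  let ?A = "Plog x g ` A" and ?B = "Plog x g ` B"
  have bdd: "bdd_above ?B" "bdd_below ?B"
    using assms(3) by (simp_all add: bounded_imp_bdd_above bounded_imp_bdd_below)
  have "bounded ?A" using assms(1,3) bounded_subset image_mono by metis
  then have "PiInt x g A = {Inf ?A .. Sup ?A}" "PiInt x g B = {Inf ?B .. Sup ?B}"
    using PiInt_eq_Inf_Sup assms(1-4) by blast+
  moreover have "Sup ?A \<le> Sup ?B" using assms(1,2) bdd by (intro cSup_subset_mono) auto
  moreover have "Inf ?B \<le> Plog x g p" using assms(4) bdd by (intro cInf_lower) auto
  moreover have "Plog x g p + c \<le> Inf ?A" using assms(2) gain by (intro cInf_greatest) auto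
  moreover have "bdd_above ?A" "bdd_below ?A"
    using bdd assms(1) by (meson bdd_above_mono bdd_below_mono image_mono)+
  then have "Inf ?A \<le> Sup ?A" using assms(2) by (intro cInf_le_cSup) auto
  ultimately show ?thesis by simp
qed

lemma self_contracted_dist_le_twice:
  assumes "self_contracted \<xi> l" "0 \<le> \<tau>" "\<tau> \<le> T" "T \<le> t" "t < l"
  shows "dist (\<xi> \<tau>) (\<xi> T) \<le> 2 * dist (\<xi> \<tau>) (\<xi> t)"
proof -
  have "dist (\<xi> T) (\<xi> t) \<le> dist (\<xi> \<tau>) (\<xi> t)"
    using assms unfolding self_contracted_def by blast
  then show ?thesis using dist_triangle2[of "\<xi> \<tau>" "\<xi> T" "\<xi> t"] by simp
qed

lemma TB_pos:
  assumes "TB \<Omega> m" "p \<in> \<Omega>" "u \<in> dirs p"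
  shows "0 < m"
proof -
  have "card {u} \<le> m" using assms unfolding TB_def by blast
  then show ?thesis by simp
qed

lemma Plog_Xi_gain:
  assumes cat: "CAT0 TYPE('a::metric_space)" and e: "0 < e" "e \<le> 1 / 6"
    and sc: "self_contracted \<xi> l" and \<tau>: "\<tau> \<in> {0..<l}" and T: "T \<in> {\<tau><..<l}"
    and gb: "gb \<in> dirs (\<xi> \<tau>)"
    and hy: "\<forall>t\<in>{\<tau><..<l}. \<xi> t \<noteq> \<xi> \<tau> \<longrightarrow> dang (\<xi> \<tau>) gb (dir (\<xi> t)) \<le> arccos (3 * e)"
    and px: "\<xi> \<tau> \<noteq> (x::'a)" and hp: "pi - 2 * arcsin (e / 2) \<le> dang (\<xi> \<tau>) (dir x) gb"
    and g: "g \<in> dirs x" and hx: "dang x (dir (\<xi> \<tau>)) g \<le> 2 * arcsin (e / 2)"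
    and y: "y \<in> Xi \<xi> l T"
  shows "Plog x g (\<xi> \<tau>) + e / 2 * dist (\<xi> \<tau>) (\<xi> T) \<le> Plog x g y"
proof -
  obtain t where t: "t \<in> {T..<l}" "y = \<xi> t" using y unfolding Xi_def by blast
  have D: "e / 2 * dist (\<xi> \<tau>) (\<xi> T) \<le> e * dist (\<xi> \<tau>) y"
    using self_contracted_dist_le_twice[OF sc, of \<tau> T t] t \<tau> T e by auto
  show ?thesis
  proof (cases "y = \<xi> \<tau>")
    case False
    have "\<tau> < t" "t < l" using t T by auto
    then have "dang (\<xi> \<tau>) gb (dir y) \<le> arccos (3 * e)" using hy False t(2) by auto
    from Plog_increment[OF cat e px False g gb hp this hx]
    show ?thesis using D by simp
  qed (use D in simp)
qed

theorem mainTheorem15: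
  fixes \<Omega> :: "'a::complete_space set" and m :: nat and \<xi> :: "real \<Rightarrow> 'a"
    and l \<tau> \<sigma> T \<epsilon> :: real and x :: 'a and gb g :: "nat \<Rightarrow> 'a"
  assumes "CAT0 TYPE('a)"
    and "bounded \<Omega>"
    and "TB \<Omega> m"
    and "\<epsilon> = 1 / (6 * real m)"
    and "self_contracted \<xi> l"
    and "\<xi> ` {0..<l} \<subseteq> \<Omega>"
    and "\<tau> \<in> {0..<l}"
    and "gb \<in> dirs (\<xi> \<tau>)"
    and "\<forall>t\<in>{\<tau><..<l}. \<xi> t \<noteq> \<xi> \<tau> \<longrightarrow> dang (\<xi> \<tau>) gb (dir (\<xi> t)) \<le> arccos (3 * \<epsilon>)"
    and "\<sigma> > 0"
    and "T \<in> {\<tau><..<l}"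
    and "x \<in> Omega_ts (\<xi> \<tau>) gb \<epsilon> \<sigma>"
    and "g \<in> dirs x"
    and "dang x (dir (\<xi> \<tau>)) g \<le> 2 * arcsin (\<epsilon> / 2)"
  shows "measure lebesgue (PiInt x g (Xi \<xi> l T))
           \<le> measure lebesgue (PiInt x g (Xi \<xi> l \<tau>)) - \<epsilon> / 2 * dist (\<xi> \<tau>) (\<xi> T)"
proof -
  \<comment> \<open>Condition (TB) is only needed to rule out \<open>m = 0\<close>, i.e. \<open>\<epsilon> = 0\<close>.\<close>
  have "\<xi> \<tau> \<in> \<Omega>" using assms(6,7) by auto
  then have "1 \<le> real m" using TB_pos[OF assms(3) _ assms(8)] by simp
  then have \<epsilon>: "0 < \<epsilon>" "\<epsilon> \<le> 1 / 6" unfolding assms(4) by (simp_all add: field_simps)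
  have x: "\<xi> \<tau> \<noteq> x" "pi - 2 * arcsin (\<epsilon> / 2) \<le> dang (\<xi> \<tau>) (dir x) gb"
    using assms(12) unfolding Omega_ts_def by auto
  have Xi: "Xi \<xi> l T \<subseteq> Xi \<xi> l \<tau>" "Xi \<xi> l T \<noteq> {}" "\<xi> \<tau> \<in> Xi \<xi> l \<tau>" "Xi \<xi> l \<tau> \<subseteq> \<Omega>"
    using assms(6,7,11) unfolding Xi_def by auto
  have "bounded (Plog x g ` Xi \<xi> l \<tau>)"
    using bounded_subset[OF assms(2) Xi(4)] by (rule bounded_Plog_image)
  from measure_PiInt_le_diff[OF Xi(1,2) this Xi(3)
      Plog_Xi_gain[OF assms(1) \<epsilon> assms(5,7,11,8,9) x assms(13,14)]]
  show ?thesis .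
qed

end
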